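(* The meta-algorithm described in the context, with the commitment subroutine \textsc{CommitUnknown} (any parameter $\delta\in(0,1)$), guarantees \[ \sum_{\ell\in\mathcal L^+}R(\ell)\le 2N_{\textsc{F}}+2C. \]
   Context: Robust dynamic pricing: there are $T$ rounds and an unknown valuation $v^\star\in[0,1)$. At each round $t$ the seller posts a price $p_t\in[0,1]$. The true sale indicator is $y_t=\mathbbm 1\{p_t\le v^\star\}$; the seller observes $\sigma_t\in\{0,1\}$, and at most $C$ rounds are corrupted: $|\{t\in[T]:\sigma_t\neq y_t\}|\le C$. Meta-algorithm: let $D=\lceil\log_2 T\rceil$. Consider the complete binary tree of intervals of depth $D$ with root $[0,1)$, where each non-leaf node $[L,R)$ has children $[L,M)$ and $[M,R)$, $M=(L+R)/2$; the depth-$D$ nodes are the leaves, forming the set $\mathcal L$, and $\ell^\star$ is the unique leaf containing $v^\star$. $\mathcal L^+$ is the set of leaves lying above $\ell^\star$ (leaves $[L_\ell,R_\ell)$ with $L_\ell>v^\star$). The algorithm keeps a current node $I$, initially the root, and repeats until the horizon ends: if $I=[L,R)$ is not a leaf, it performs a safety check — post $L$ and observe $\sigma_L$, post $R$ and observe $\sigma_R$; the check fails if $\sigma_L=0$ or $\sigma_R=1$ (by convention the query at $L=0$ and the query at $R=1$ always count as passing). On failure $I$ becomes its parent; otherwise it posts $M$, observes $\sigma_M$, and $I$ becomes $[M,R)$ if $\sigma_M=1$ and $[L,M)$ if $\sigma_M=0$. If $I$ is a leaf, the commitment subroutine is run on $I$; if it returns FAIL, $I$ becomes its parent. \textsc{CommitUnknown}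 with parameter $\delta$: each leaf $\ell$ has a counter $s_\ell$, initialized to $0$ at the start of the horizon and never reset. On leaf $\ell=[L,R)$ it repeats the following two-round block: post $L$ and observe $\sigma_L$; if $\sigma_L=0$ return FAIL. Increase $s_\ell$ by $1$ and sample, independently, $B\sim\mathrm{Bernoulli}(\min\{4\ln(T/\delta)/s_\ell,1\})$. If $B=0$, post $L$ and observe $\sigma_L$, returning FAIL if $\sigma_L=0$; if $B=1$, post $R$ and observe $\sigma_R$, returning FAIL if $\sigma_R=1$. For a leaf $\ell$, $Q(\ell)$ is the set of rounds during which the commitment subroutine runs on $\ell$, and $R(\ell)=\sum_{t\in Q(\ell)}(v^\star-p_t\mathbbm 1\{p_t\le v^\star\})$. $N_{\textsc{F}}$ is the number of times the commitment subroutine returns FAIL on a leaf different from $\ell^\star$. *)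

theory Defs
  imports Complex_Main
begin

text \<open>Nodes of the binary tree are pairs (d, k): depth d, index k, standing for the
interval [k/2^d, (k+1)/2^d).  Rounds are indexed 0, ..., T-1.\<close>

definition lo :: "nat \<Rightarrow> nat \<Rightarrow> real" where
  "lo d k = real k / 2 ^ d"

definition hi :: "nat \<Rightarrow> nat \<Rightarrow> real" where
  "hi d k = real (k + 1) / 2 ^ d"

definition depth :: "nat \<Rightarrow> nat" where
  "depth T = nat \<lceil>log 2 (real T)\<rceil>"

text \<open>Phase of the algorithm at the current round:
  ChkL: safety check, query at L;  ChkR b: safety check, query at R (b = query at L passed);
  Mid: query at M;  Com1: first round of a CommitUnknown block (query at L);
  Com2 b: second round of a block, b = the sampled Bernoulli B.\<close>
datatype phase = ChkL | ChkR bool | Mid | Com1 | Com2 bool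

record state =
  dep :: nat
  idx :: nat
  ph  :: phase
  cnt :: "nat \<Rightarrow> nat"   \<comment> \<open>counters s_l, indexed by leaf index\<close>

definition price :: "state \<Rightarrow> real" where
  "price st = (case ph st of
      ChkL \<Rightarrow> lo (dep st) (idx st)
    | ChkR _ \<Rightarrow> hi (dep st) (idx st)
    | Mid \<Rightarrow> (lo (dep st) (idx st) + hi (dep st) (idx st)) / 2
    | Com1 \<Rightarrow> lo (dep st) (idx st)
    | Com2 b \<Rightarrow> (if b then hi (dep st) (idx st) else lo (dep st) (idx st)))"

definition enter :: "nat \<Rightarrow> nat \<Rightarrow> nat \<Rightarrow> state \<Rightarrow> state" where
  "enter T d k st = st\<lparr>dep := d, idx := k, ph := (if d = depth T then Com1 else ChkL)\<rparr>"

definition to_parent :: "nat \<Rightarrow> state \<Rightarrow> state" where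
  "to_parent T st = (if dep st = 0 then enter T 0 0 st
                     else enter T (dep st - 1) (idx st div 2) st)"

definition init_state :: "nat \<Rightarrow> state" where
  "init_state T = enter T 0 0 \<lparr>dep = 0, idx = 0, ph = ChkL, cnt = (\<lambda>_. 0)\<rparr>"

definition bprob :: "nat \<Rightarrow> real \<Rightarrow> nat \<Rightarrow> real" where
  "bprob T \<delta> s = min (4 * ln (real T / \<delta>) / real s) 1"

text \<open>Realised value of B: an arbitrary outcome c, restricted to the support of the
Bernoulli distribution (forced when the probability is 0 or 1).\<close>
definition bsample :: "nat \<Rightarrow> real \<Rightarrow> nat \<Rightarrow> bool \<Rightarrow> bool" where
  "bsample T \<delta> s c = (if bprob T \<delta> s = 1 then True else if bprob T \<delta> s = 0 then False else c)"

definition step :: "nat \<Rightarrow> real \<Rightarrow> bool \<Rightarrow> bool \<Rightarrow> state \<Rightarrow> state" where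
  "step T \<delta> c sg st = (let d = dep st; k = idx st in
     case ph st of
       ChkL \<Rightarrow> st\<lparr>ph := ChkR (lo d k = 0 \<or> sg)\<rparr>
     | ChkR pL \<Rightarrow> (if pL \<and> (hi d k = 1 \<or> \<not> sg) then st\<lparr>ph := Mid\<rparr> else to_parent T st)
     | Mid \<Rightarrow> (if sg then enter T (d + 1) (2 * k + 1) st else enter T (d + 1) (2 * k) st)
     | Com1 \<Rightarrow> (if \<not> sg then to_parent T st
                else (let s' = (cnt st)(k := cnt st k + 1)
                      in st\<lparr>cnt := s', ph := Com2 (bsample T \<delta> (s' k) c)\<rparr>))
     | Com2 b \<Rightarrow> (if (b \<and> sg) \<or> (\<not> b \<and> \<not> sg) then to_parent T st else st\<lparr>ph := Com1\<rparr>))"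

definition commit_fail :: "state \<Rightarrow> bool \<Rightarrow> bool" where
  "commit_fail st sg = (case ph st of
       Com1 \<Rightarrow> \<not> sg
     | Com2 b \<Rightarrow> (b \<and> sg) \<or> (\<not> b \<and> \<not> sg)
     | _ \<Rightarrow> False)"

definition in_commit :: "state \<Rightarrow> bool" where
  "in_commit st = (case ph st of Com1 \<Rightarrow> True | Com2 _ \<Rightarrow> True | _ \<Rightarrow> False)"

text \<open>Trajectory: sg t is the observation at round t, coin t the random bit at round t.\<close>
primrec traj :: "nat \<Rightarrow> real \<Rightarrow> (nat \<Rightarrow> bool) \<Rightarrow> (nat \<Rightarrow> bool) \<Rightarrow> nat \<Rightarrow> state" where
  "traj T \<delta> sg coin 0 = init_state T"
| "traj T \<delta> sg coin (Suc t) = step T \<delta> (coin t) (sg t) (traj T \<delta> sg coin t)"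

definition post :: "nat \<Rightarrow> real \<Rightarrow> (nat \<Rightarrow> bool) \<Rightarrow> (nat \<Rightarrow> bool) \<Rightarrow> nat \<Rightarrow> real" where
  "post T \<delta> sg coin t = price (traj T \<delta> sg coin t)"

text \<open>Number of corrupted rounds: sigma_t differs from y_t = [p_t <= v*].\<close>
definition corruptions :: "nat \<Rightarrow> real \<Rightarrow> real \<Rightarrow> (nat \<Rightarrow> bool) \<Rightarrow> (nat \<Rightarrow> bool) \<Rightarrow> nat" where
  "corruptions T \<delta> v sg coin = card {t. t < T \<and> sg t \<noteq> (post T \<delta> sg coin t \<le> v)}"

definition Qset :: "nat \<Rightarrow> real \<Rightarrow> (nat \<Rightarrow> bool) \<Rightarrow> (nat \<Rightarrow> bool) \<Rightarrow> nat \<Rightarrow> nat set" where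
  "Qset T \<delta> sg coin l = {t. t < T \<and> in_commit (traj T \<delta> sg coin t)
                            \<and> dep (traj T \<delta> sg coin t) = depth T \<and> idx (traj T \<delta> sg coin t) = l}"

definition regret_leaf :: "nat \<Rightarrow> real \<Rightarrow> real \<Rightarrow> (nat \<Rightarrow> bool) \<Rightarrow> (nat \<Rightarrow> bool) \<Rightarrow> nat \<Rightarrow> real" where
  "regret_leaf T \<delta> v sg coin l =
     (\<Sum>t\<in>Qset T \<delta> sg coin l.
        v - post T \<delta> sg coin t * (if post T \<delta> sg coin t \<le> v then 1 else 0))"

definition leaves_above :: "nat \<Rightarrow> real \<Rightarrow> nat set" where
  "leaves_above T v = {l. l < 2 ^ depth T \<and> lo (depth T) l > v}"

definition contains_v :: "nat \<Rightarrow> real \<Rightarrow> nat \<Rightarrow> bool" where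
  "contains_v T v l = (lo (depth T) l \<le> v \<and> v < hi (depth T) l)"

definition num_fail :: "nat \<Rightarrow> real \<Rightarrow> real \<Rightarrow> (nat \<Rightarrow> bool) \<Rightarrow> (nat \<Rightarrow> bool) \<Rightarrow> nat" where
  "num_fail T \<delta> v sg coin = card {t. t < T \<and> commit_fail (traj T \<delta> sg coin t) (sg t)
                                  \<and> \<not> contains_v T v (idx (traj T \<delta> sg coin t))}"

end

theory Submission
  imports Defs
begin

text \<open>On a leaf above \<open>v\<^sup>*\<close> every commitment round posts a price above \<open>v\<^sup>*\<close>, so it makes
  no sale and costs regret \<open>v\<^sup>* \<le> 1\<close>.  Such a round either makes the subroutine return FAIL,
  or is corrupted, or is a passing query at \<open>R\<close> in the second round of a block; in the last
  case the query at \<open>L\<close> just before it was answered with a sale although \<open>L > v\<^sup>*\<close>, so that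
  earlier round is corrupted.  Hence there are at most \<open>N\<^sub>F + 2C\<close> such rounds.\<close>

lemma lo_less_hi: "lo d k < hi d k"
  unfolding lo_def hi_def by (simp add: divide_strict_right_mono)

lemma ph_enter_ne_Com2: "ph (enter T d k st) \<noteq> Com2 b"
  unfolding enter_def by simp

lemma ph_to_parent_ne_Com2: "ph (to_parent T st) \<noteq> Com2 b"
  unfolding to_parent_def by (simp add: ph_enter_ne_Com2)

lemma step_into_Com2:
  assumes "ph (step T \<delta> c s st) = Com2 b"
  shows "ph st = Com1 \<and> s \<and> dep (step T \<delta> c s st) = dep st \<and> idx (step T \<delta> c s st) = idx st"
  using assms
  by (cases "ph st")
     (auto simp: step_def Let_def ph_enter_ne_Com2 ph_to_parent_ne_Com2 split: if_splits)

lemma traj_Com2_predecessor: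
  assumes "ph (traj T \<delta> sg coin t) = Com2 b"
  obtains t' where "t = Suc t'" "ph (traj T \<delta> sg coin t') = Com1" "sg t'"
    "dep (traj T \<delta> sg coin t) = dep (traj T \<delta> sg coin t')"
    "idx (traj T \<delta> sg coin t) = idx (traj T \<delta> sg coin t')"
proof (cases t)
  case 0
  with assms show ?thesis by (simp add: init_state_def ph_enter_ne_Com2)
next
  case (Suc t')
  with assms have "ph (step T \<delta> (coin t') (sg t') (traj T \<delta> sg coin t')) = Com2 b"
    by simp
  from step_into_Com2[OF this] Suc show ?thesis by (intro that) auto
qed

lemma price_in_commit_gt:
  assumes "in_commit st" and "v < lo (dep st) (idx st)"
  shows "v < price st"
  using assms less_trans[OF assms(2) lo_less_hi]
  by (auto simp: in_commit_def price_def split: phase.splits)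

lemma card_le_Un_image:
  assumes "finite A" "finite B" "S \<subseteq> A \<union> B \<union> f ` B"
  shows "card S \<le> card A + 2 * card B"
proof -
  have "card S \<le> card (A \<union> B \<union> f ` B)"
    using assms by (intro card_mono) auto
  also have "\<dots> \<le> card A + card B + card (f ` B)"
    by (meson card_Un_le add_le_mono order_trans le_refl)
  also have "card (f ` B) \<le> card B"
    by (rule card_image_le[OF assms(2)])
  finally show ?thesis by simp
qed

definition commit_rounds_above :: "nat \<Rightarrow> real \<Rightarrow> real \<Rightarrow> (nat \<Rightarrow> bool) \<Rightarrow> (nat \<Rightarrow> bool) \<Rightarrow> nat set"
  where "commit_rounds_above T \<delta> v sg coin = (\<Union>l\<in>leaves_above T v. Qset T \<delta> sg coin l)"

definition fail_rounds :: "nat \<Rightarrow> real \<Rightarrow> real \<Rightarrow> (nat \<Rightarrow> bool) \<Rightarrow> (nat \<Rightarrow> bool) \<Rightarrow> nat set"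
  where "fail_rounds T \<delta> v sg coin = {t. t < T \<and> commit_fail (traj T \<delta> sg coin t) (sg t)
                                          \<and> \<not> contains_v T v (idx (traj T \<delta> sg coin t))}"

definition corrupted_rounds :: "nat \<Rightarrow> real \<Rightarrow> real \<Rightarrow> (nat \<Rightarrow> bool) \<Rightarrow> (nat \<Rightarrow> bool) \<Rightarrow> nat set"
  where "corrupted_rounds T \<delta> v sg coin = {t. t < T \<and> sg t \<noteq> (post T \<delta> sg coin t \<le> v)}"

lemma mem_commit_rounds_above:
  "t \<in> commit_rounds_above T \<delta> v sg coin \<longleftrightarrow>
     t < T \<and> in_commit (traj T \<delta> sg coin t) \<and> dep (traj T \<delta> sg coin t) = depth T
       \<and> idx (traj T \<delta> sg coin t) \<in> leaves_above T v"
  unfolding commit_rounds_above_def Qset_def by auto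

lemma post_gt_on_commit_rounds_above:
  assumes "t \<in> commit_rounds_above T \<delta> v sg coin"
  shows "v < post T \<delta> sg coin t"
  using assms unfolding post_def mem_commit_rounds_above leaves_above_def
  by (auto intro: price_in_commit_gt)

lemma regret_leaves_above_eq:
  "(\<Sum>l\<in>leaves_above T v. regret_leaf T \<delta> v sg coin l)
     = v * card (commit_rounds_above T \<delta> v sg coin)"
proof -
  have "(\<Sum>l\<in>leaves_above T v. regret_leaf T \<delta> v sg coin l)
      = (\<Sum>l\<in>leaves_above T v. \<Sum>t\<in>Qset T \<delta> sg coin l. v)"
    unfolding regret_leaf_def
  proof (intro sum.cong refl)
    fix l t assume "l \<in> leaves_above T v" "t \<in> Qset T \<delta> sg coin l"
    then have "t \<in> commit_rounds_above T \<delta> v sg coin"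
      by (auto simp: commit_rounds_above_def)
    then have "v < post T \<delta> sg coin t"
      by (rule post_gt_on_commit_rounds_above)
    then show "v - post T \<delta> sg coin t * (if post T \<delta> sg coin t \<le> v then 1 else 0) = v"
      by simp
  qed
  also have "\<dots> = (\<Sum>t\<in>commit_rounds_above T \<delta> v sg coin. v)"
    unfolding commit_rounds_above_def
    by (rule sum.UNION_disjoint[symmetric]) (auto simp: leaves_above_def Qset_def)
  finally show ?thesis by simp
qed

lemma commit_rounds_above_subset:
  "commit_rounds_above T \<delta> v sg coin
     \<subseteq> fail_rounds T \<delta> v sg coin \<union> corrupted_rounds T \<delta> v sg coin
         \<union> Suc ` corrupted_rounds T \<delta> v sg coin"
proof
  fix t
  let ?tr = "traj T \<delta> sg coin"
  assume t: "t \<in> commit_rounds_above T \<delta> v sg coin"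
  then have "t < T" and "in_commit (?tr t)"
    by (simp_all add: mem_commit_rounds_above)
  have not_contains: "\<not> contains_v T v (idx (?tr t))"
    using t by (auto simp: mem_commit_rounds_above leaves_above_def contains_v_def)
  have corrupted_if_sale: "t \<in> corrupted_rounds T \<delta> v sg coin" if "sg t"
    using that \<open>t < T\<close> post_gt_on_commit_rounds_above[OF t]
    by (simp add: corrupted_rounds_def)
  have fail_if_commit_fail: "t \<in> fail_rounds T \<delta> v sg coin" if "commit_fail (?tr t) (sg t)"
    using that \<open>t < T\<close> not_contains by (simp add: fail_rounds_def)
  consider "ph (?tr t) = Com1" | b where "ph (?tr t) = Com2 b"
    using \<open>in_commit (?tr t)\<close> by (auto simp: in_commit_def split: phase.splits)
  then show "t \<in> fail_rounds T \<delta> v sg coin \<union> corrupted_rounds T \<delta> v sg coin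
               \<union> Suc ` corrupted_rounds T \<delta> v sg coin"
  proof cases
    case 1
    then show ?thesis
      using corrupted_if_sale fail_if_commit_fail by (auto simp: commit_fail_def)
  next
    case (2 b)
    show ?thesis
    proof (cases "b \<and> \<not> sg t")
      case False
      then show ?thesis
        using 2 corrupted_if_sale fail_if_commit_fail by (auto simp: commit_fail_def)
    next
      case True
      \<comment> \<open>a passing query at \<open>R\<close>: blame the query at \<open>L\<close> in the round before\<close>
      obtain t' where t': "t = Suc t'" "ph (?tr t') = Com1" "sg t'"
        "dep (?tr t) = dep (?tr t')" "idx (?tr t) = idx (?tr t')"
        using traj_Com2_predecessor[OF 2] by blast
      then have "t' \<in> commit_rounds_above T \<delta> v sg coin"
        using t by (auto simp: mem_commit_rounds_above in_commit_def)
      from post_gt_on_commit_rounds_above[OF this]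
      have "t' \<in> corrupted_rounds T \<delta> v sg coin"
        using \<open>sg t'\<close> \<open>t < T\<close> \<open>t = Suc t'\<close>
        by (simp add: corrupted_rounds_def)
      then show ?thesis using \<open>t = Suc t'\<close> by blast
    qed
  qed
qed

theorem lemma5p3:
  fixes T C :: nat and \<delta> v :: real and sg coin :: "nat \<Rightarrow> bool"
  assumes "T \<ge> 1" and "0 \<le> v" and "v < 1" and "0 < \<delta>" and "\<delta> < 1"
    and "corruptions T \<delta> v sg coin \<le> C"
  shows "(\<Sum>l\<in>leaves_above T v. regret_leaf T \<delta> v sg coin l)
           \<le> 2 * real (num_fail T \<delta> v sg coin) + 2 * real C"
proof -
  \<comment> \<open>the bound holds for every outcome of the coins\<close>
  let ?S = "commit_rounds_above T \<delta> v sg coin"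
  let ?F = "fail_rounds T \<delta> v sg coin"
  let ?Cor = "corrupted_rounds T \<delta> v sg coin"
  have card_S: "card ?S \<le> card ?F + 2 * card ?Cor"
    by (rule card_le_Un_image[OF _ _ commit_rounds_above_subset])
       (simp_all add: fail_rounds_def corrupted_rounds_def)
  have "card ?F = num_fail T \<delta> v sg coin" "card ?Cor \<le> C"
    using assms(6) by (simp_all add: fail_rounds_def num_fail_def corrupted_rounds_def corruptions_def)
  with card_S have "real (card ?S) \<le> 2 * real (num_fail T \<delta> v sg coin) + 2 * real C"
    by linarith
  moreover have "v * card ?S \<le> card ?S"
    using assms(2,3) by (simp add: mult_left_le_one_le)
  ultimately show ?thesis
    by (simp add: regret_leaves_above_eq)
qed

end
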